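(* Let $Y,Y'\in\mathfrak o(V,K)$. The special tuples $(Y,e_{n+2})$ and $(Y',e_{n+2})$ are equivalent if and only if there exist $P\in O(V,K)_{e_{n+2}}$ and a vector $w\in V$ such that $$Y'=P\,(Y+L_{w,e_{n+2}})\,P^{-1}.$$ Moreover, in any equivalence between them (i.e. any data $P,v,p,v_0$ as in the definition of equivalence) the real number $v_0$ equals $0$.
   Context: Let $n\ge 0$ be an integer and let $\widetilde K$ be a real symmetric $n\times n$ matrix with $\widetilde K^2=I_n$. Let $V=\mathbb R^{n+2}$ with standard basis $e_1,\dots,e_{n+2}$, and let $K=\begin{pmatrix}0&0&1\\0&\widetilde K&0\\1&0&0\end{pmatrix}$ (block sizes $1,n,1$). For $x,w\in V$ write $x^*=x^TK$ and $L_{u,w}=u\,w^*-w\,u^*$. Let $O(V,K)=\{P:P^TKP=K\}$, $\mathfrak o(V,K)=\{X:X^TK+KX=0\}$, $O(V,K)_{e_{n+2}}=\{P\in O(V,K):Pe_{n+2}=e_{n+2}\}$. A special tuple is a pair $(Y,y)$ with $Y\in\mathfrak o(V,K)$, $y\in V$. Two special tuples $(Y,y)$ and $(Y',y')$ are equivalent if there exist $P\in O(V,K)_{e_{n+2}}$, vectors $v,p\in V$ with $p^*(e_{n+2})=0$, and $v_0\in\mathbb R$ such that $Y'+L_{v,e_{n+2}}=P(Y+L_{p,y})P^{-1}$ and $y'=Py+v_0e_{n+2}$. (A special tuple $(Y,e_{n+2})$ is called a standardized affine special tuple.) *)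

theory Defs
  imports "Jordan_Normal_Form.Matrix"
begin

text \<open>Setting: V = R^(n+2), realised as JNF vectors of dimension n+2 (0-based indices:
  the basis vector e_1 is index 0, e_(n+2) is index n+1).\<close>

definition Kbig :: "nat \<Rightarrow> real mat \<Rightarrow> real mat" where
  "Kbig n Kt = mat (n+2) (n+2) (\<lambda>(i,j).
     if i = 0 \<and> j = n+1 then 1
     else if i = n+1 \<and> j = 0 then 1
     else if 1 \<le> i \<and> i \<le> n \<and> 1 \<le> j \<and> j \<le> n then Kt $$ (i-1, j-1)
     else 0)"

definition elast :: "nat \<Rightarrow> real vec" where
  "elast n = unit_vec (n+2) (n+1)"

definition kstar :: "real mat \<Rightarrow> real vec \<Rightarrow> real vec \<Rightarrow> real" where
  "kstar K x w = x \<bullet> (K *\<^sub>v w)"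

text \<open>The row vector x^* = x^T K (as a vector of its entries).\<close>
definition kstar_row :: "real mat \<Rightarrow> real vec \<Rightarrow> real vec" where
  "kstar_row K x = transpose_mat K *\<^sub>v x"

definition Lmat :: "real mat \<Rightarrow> real vec \<Rightarrow> real vec \<Rightarrow> real mat" where
  "Lmat K u w = mat (dim_row K) (dim_row K)
     (\<lambda>(i,j). u $ i * kstar_row K w $ j - w $ i * kstar_row K u $ j)"

definition orth_group :: "real mat \<Rightarrow> real mat set" where
  "orth_group K = {P. P \<in> carrier_mat (dim_row K) (dim_row K) \<and> transpose_mat P * K * P = K}"

definition orth_stab :: "real mat \<Rightarrow> real vec \<Rightarrow> real mat set" where
  "orth_stab K e = {P \<in> orth_group K. P *\<^sub>v e = e}"

definition orth_alg :: "real mat \<Rightarrow> real mat set" where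
  "orth_alg K = {X. X \<in> carrier_mat (dim_row K) (dim_row K) \<and>
     transpose_mat X * K + K * X = 0\<^sub>m (dim_row K) (dim_row K)}"

definition mat_inv :: "real mat \<Rightarrow> real mat" where
  "mat_inv P = (SOME Q. Q \<in> carrier_mat (dim_row P) (dim_row P) \<and>
      P * Q = 1\<^sub>m (dim_row P) \<and> Q * P = 1\<^sub>m (dim_row P))"

definition equiv_data ::
  "real mat \<Rightarrow> real vec \<Rightarrow> real mat \<Rightarrow> real vec \<Rightarrow> real mat \<Rightarrow> real vec
   \<Rightarrow> real mat \<Rightarrow> real vec \<Rightarrow> real vec \<Rightarrow> real \<Rightarrow> bool" where
  "equiv_data K e Y y Y' y' P v p v0 \<longleftrightarrow>
     P \<in> orth_stab K e \<and>
     v \<in> carrier_vec (dim_row K) \<and> p \<in> carrier_vec (dim_row K) \<and>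
     kstar K p e = 0 \<and>
     Y' + Lmat K v e = P * (Y + Lmat K p y) * mat_inv P \<and>
     y' = P *\<^sub>v y + v0 \<cdot>\<^sub>v e"

definition special_equiv ::
  "real mat \<Rightarrow> real vec \<Rightarrow> real mat \<Rightarrow> real vec \<Rightarrow> real mat \<Rightarrow> real vec \<Rightarrow> bool" where
  "special_equiv K e Y y Y' y' \<longleftrightarrow> (\<exists>P v p v0. equiv_data K e Y y Y' y' P v p v0)"

end

theory Submission
  imports Defs "Jordan_Normal_Form.Determinant"
begin

(* Conjugation by P in O(V,K) transports L: since K P^-1 = P^T K, one has
   P L_{u,w} P^-1 = L_{Pu,Pw}, and as P fixes e = e_{n+2} also
   P (Y + L_{p,e}) P^-1 = P Y P^-1 + L_{Pp,e}.  Because L_{u,e} is linear in u, the correction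
   L_{v,e} in an equivalence is absorbed by replacing p with p - P^-1 v; conversely the pair
   v = -Pw, p = 0 realises any w.  Finally e = P e + v0 e = (1 + v0) e forces v0 = 0. *)

lemma mat_inv_of_left_inverse:
  fixes P Q :: "real mat"
  assumes P: "P \<in> carrier_mat N N" and Q: "Q \<in> carrier_mat N N" and QP: "Q * P = 1\<^sub>m N"
  shows "mat_inv P \<in> carrier_mat N N" "P * mat_inv P = 1\<^sub>m N" "mat_inv P * P = 1\<^sub>m N"
proof -
  have "P * Q = 1\<^sub>m N" by (rule mat_mult_left_right_inverse[OF Q P QP])
  then have "\<exists>Q. Q \<in> carrier_mat (dim_row P) (dim_row P) \<and>
      P * Q = 1\<^sub>m (dim_row P) \<and> Q * P = 1\<^sub>m (dim_row P)"
    using P Q QP by auto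
  from someI_ex[OF this] P show "mat_inv P \<in> carrier_mat N N" "P * mat_inv P = 1\<^sub>m N"
    "mat_inv P * P = 1\<^sub>m N"
    unfolding mat_inv_def by auto
qed

lemma invertible_matE:
  fixes K :: "'a :: semiring_1 mat"
  assumes "invertible_mat K" and "K \<in> carrier_mat N N"
  obtains K' where "K' \<in> carrier_mat N N" "K' * K = 1\<^sub>m N" "K * K' = 1\<^sub>m N"
proof -
  from assms obtain K' where KK': "K * K' = 1\<^sub>m N" and K'K: "K' * K = 1\<^sub>m (dim_row K')"
    unfolding invertible_mat_def inverts_mat_def by auto
  have "dim_col K' = N" using arg_cong[OF KK', of dim_col] by simp
  moreover have "dim_row K' = N" using arg_cong[OF K'K, of dim_col] assms(2) by simp
  ultimately show ?thesis using that KK' K'K by auto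
qed

lemma invertible_mat_if_mult_self_eq_one:
  fixes K :: "'a :: semiring_1 mat"
  assumes "K \<in> carrier_mat N N" and "K * K = 1\<^sub>m N"
  shows "invertible_mat K"
  using assms unfolding invertible_mat_def inverts_mat_def square_mat.simps by auto

lemma add_uminus_cancel_mat:
  "A \<in> carrier_mat nr nc \<Longrightarrow> B \<in> carrier_mat nr nc \<Longrightarrow> A + B + - B = (A :: 'a :: group_add mat)"
  by (intro eq_matI) auto

definition outer_prod :: "'a :: semiring_0 vec \<Rightarrow> 'a vec \<Rightarrow> 'a mat" where
  "outer_prod u v = mat (dim_vec u) (dim_vec v) (\<lambda>(i, j). u $ i * v $ j)"

lemma outer_prod_carrier [simp]:
  "u \<in> carrier_vec nr \<Longrightarrow> v \<in> carrier_vec nc \<Longrightarrow> outer_prod u v \<in> carrier_mat nr nc"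
  by (simp add: outer_prod_def)

lemma mult_outer_prod:
  fixes A :: "'a :: comm_semiring_0 mat"
  assumes A: "A \<in> carrier_mat nr N" and u: "u \<in> carrier_vec N"
  shows "A * outer_prod u v = outer_prod (A *\<^sub>v u) v"
proof (rule eq_matI)
  fix i j assume "i < dim_row (outer_prod (A *\<^sub>v u) v)" "j < dim_col (outer_prod (A *\<^sub>v u) v)"
  moreover have "col (outer_prod u v) j = v $ j \<cdot>\<^sub>v u" if "j < dim_vec v"
    using that u by (intro eq_vecI) (auto simp: outer_prod_def mult.commute)
  ultimately show "(A * outer_prod u v) $$ (i, j) = outer_prod (A *\<^sub>v u) v $$ (i, j)"
    using A u by (auto simp: outer_prod_def mult.commute)
qed (auto simp: outer_prod_def)

lemma outer_prod_mult:
  fixes B :: "'a :: comm_semiring_0 mat"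
  assumes B: "B \<in> carrier_mat N nc" and v: "v \<in> carrier_vec N"
  shows "outer_prod u v * B = outer_prod u (transpose_mat B *\<^sub>v v)"
proof (rule eq_matI)
  fix i j assume ij: "i < dim_row (outer_prod u (transpose_mat B *\<^sub>v v))"
    "j < dim_col (outer_prod u (transpose_mat B *\<^sub>v v))"
  have "row (outer_prod u v) i = u $ i \<cdot>\<^sub>v v"
    using ij v by (intro eq_vecI) (auto simp: outer_prod_def)
  moreover have "col B j \<bullet> v = v \<bullet> col B j"
    using ij B v by (intro comm_scalar_prod) auto
  ultimately
  show "(outer_prod u v * B) $$ (i, j) = outer_prod u (transpose_mat B *\<^sub>v v) $$ (i, j)"
    using ij B v by (auto simp: outer_prod_def)
qed (auto simp: outer_prod_def)

lemma orth_group_mat_inv: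
  fixes K P :: "real mat"
  assumes K: "K \<in> carrier_mat N N" "invertible_mat K" and P: "P \<in> orth_group K"
  shows "P \<in> carrier_mat N N" "mat_inv P \<in> carrier_mat N N"
    "P * mat_inv P = 1\<^sub>m N" "mat_inv P * P = 1\<^sub>m N"
    "K * mat_inv P = transpose_mat P * K"
proof -
  show Pc: "P \<in> carrier_mat N N"
    using P K unfolding orth_group_def by auto
  have PKP: "transpose_mat P * K * P = K"
    using P unfolding orth_group_def by auto
  obtain K' where K': "K' \<in> carrier_mat N N" "K' * K = 1\<^sub>m N"
    using invertible_matE[OF K(2,1)] by blast
  \<comment> \<open>\<open>K' P\<^sup>T K\<close> is a left inverse of \<open>P\<close>.\<close>
  have "(K' * transpose_mat P * K) * P = K' * (transpose_mat P * K * P)"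
    using K K' Pc by (simp add: assoc_mult_mat[of _ N N _ N _ N])
  then have "(K' * transpose_mat P * K) * P = 1\<^sub>m N"
    unfolding PKP K'(2) .
  then show inv: "mat_inv P \<in> carrier_mat N N" "P * mat_inv P = 1\<^sub>m N" "mat_inv P * P = 1\<^sub>m N"
    using mat_inv_of_left_inverse[OF Pc, of "K' * transpose_mat P * K"] K K' Pc by simp_all
  have "transpose_mat P * K = transpose_mat P * K * (P * mat_inv P)"
    using inv(2) K Pc by (simp add: right_mult_one_mat)
  also have "\<dots> = (transpose_mat P * K * P) * mat_inv P"
    using K Pc inv(1) by (simp add: assoc_mult_mat[of _ N N _ N _ N])
  also have "\<dots> = K * mat_inv P"
    unfolding PKP ..
  finally show "K * mat_inv P = transpose_mat P * K" by simp
qed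

lemma kstar_row_carrier [simp]:
  "K \<in> carrier_mat N N \<Longrightarrow> kstar_row K u \<in> carrier_vec N"
  unfolding kstar_row_def carrier_vec_def by simp

lemma Lmat_carrier [simp]: "K \<in> carrier_mat N N \<Longrightarrow> Lmat K u w \<in> carrier_mat N N"
  by (simp add: Lmat_def)

lemma Lmat_eq_outer_prod:
  assumes K: "K \<in> carrier_mat N N" and u: "u \<in> carrier_vec N" and w: "w \<in> carrier_vec N"
  shows "Lmat K u w = outer_prod u (kstar_row K w) - outer_prod w (kstar_row K u)"
  using K u w by (intro eq_matI) (auto simp: Lmat_def outer_prod_def kstar_row_def)

text \<open>The identity \<open>K Q = P\<^sup>T K\<close> says \<open>Q\<^sup>T x\<^sup>* = (P x)\<^sup>*\<close>, so conjugation moves \<open>P\<close>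
  inside the outer products defining \<open>L\<close>.\<close>
lemma Lmat_transport:
  fixes K P Q :: "real mat"
  assumes K: "K \<in> carrier_mat N N" and P: "P \<in> carrier_mat N N" and Q: "Q \<in> carrier_mat N N"
    and KQ: "K * Q = transpose_mat P * K"
    and u: "u \<in> carrier_vec N" and w: "w \<in> carrier_vec N"
  shows "P * Lmat K u w * Q = Lmat K (P *\<^sub>v u) (P *\<^sub>v w)"
proof -
  have star: "transpose_mat Q *\<^sub>v kstar_row K x = kstar_row K (P *\<^sub>v x)"
    if x: "x \<in> carrier_vec N" for x
  proof -
    have "transpose_mat Q *\<^sub>v kstar_row K x = transpose_mat (K * Q) *\<^sub>v x"
      using K Q x by (simp add: kstar_row_def transpose_mult)
    also have "\<dots> = kstar_row K (P *\<^sub>v x)"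
      unfolding KQ using K P x by (simp add: kstar_row_def transpose_mult)
    finally show ?thesis .
  qed
  have conj: "P * outer_prod x (kstar_row K y) * Q = outer_prod (P *\<^sub>v x) (kstar_row K (P *\<^sub>v y))"
    if "x \<in> carrier_vec N" "y \<in> carrier_vec N" for x y
    using that K P Q by (simp add: mult_outer_prod outer_prod_mult star)
  show ?thesis
    using K P Q u w
    by (simp add: Lmat_eq_outer_prod conj mult_minus_distrib_mat[of P N N _ N]
        minus_mult_distrib_mat[of _ N N _ _ N])
qed

lemma orth_stab_conj_add_Lmat:
  assumes K: "K \<in> carrier_mat N N" "invertible_mat K" and P: "P \<in> orth_stab K e"
    and e: "e \<in> carrier_vec N" and Y: "Y \<in> carrier_mat N N" and u: "u \<in> carrier_vec N"
  shows "P * (Y + Lmat K u e) * mat_inv P = P * Y * mat_inv P + Lmat K (P *\<^sub>v u) e"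
proof -
  have Pg: "P \<in> orth_group K" and Pe: "P *\<^sub>v e = e"
    using P by (auto simp: orth_stab_def)
  note inv = orth_group_mat_inv[OF K Pg]
  show ?thesis
    using inv Lmat_transport[OF K(1) inv(1,2,5) u e] K Y
    by (simp add: Pe mult_add_distrib_mat[of P N N _ N] add_mult_distrib_mat[of _ N N _ _ N])
qed

lemma Lmat_diff_left:
  assumes K: "K \<in> carrier_mat N N" and a: "a \<in> carrier_vec N" and b: "b \<in> carrier_vec N"
  shows "Lmat K (a - b) w = Lmat K a w - Lmat K b w"
proof -
  have "kstar_row K (a - b) = kstar_row K a - kstar_row K b"
    unfolding kstar_row_def using K a b by (simp add: mult_minus_distrib_mat_vec[of _ N N])
  then have star_diff: "kstar_row K (a - b) $ j = kstar_row K a $ j - kstar_row K b $ j"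
    if "j < N" for j
    using that kstar_row_carrier[OF K, of b] by simp
  then show ?thesis
    using K a b
    by (intro eq_matI) (auto simp: Lmat_def star_diff left_diff_distrib right_diff_distrib)
qed

lemma Lmat_uminus_left:
  assumes K: "K \<in> carrier_mat N N" and a: "a \<in> carrier_vec N"
  shows "Lmat K (- a) w = - Lmat K a w"
proof -
  have star_uminus: "kstar_row K (- a) $ j = - kstar_row K a $ j" if "j < N" for j
    using that K a by (simp add: kstar_row_def)
  then show ?thesis
    using K a by (intro eq_matI) (auto simp: Lmat_def star_uminus)
qed

lemma Lmat_zero_left: "K \<in> carrier_mat N N \<Longrightarrow> Lmat K (0\<^sub>v N) w = 0\<^sub>m N N"
  by (intro eq_matI) (auto simp: Lmat_def kstar_row_def)

lemma equiv_dataD: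
  assumes "equiv_data K e Y y Y' y' P v p v0"
  shows "P \<in> orth_stab K e" "v \<in> carrier_vec (dim_row K)" "p \<in> carrier_vec (dim_row K)"
    "Y' + Lmat K v e = P * (Y + Lmat K p y) * mat_inv P" "y' = P *\<^sub>v y + v0 \<cdot>\<^sub>v e"
  using assms unfolding equiv_data_def by simp_all

lemma equiv_data_same_vector_scalar_eq_0:
  assumes "equiv_data K e Y e Y' e P v p v0" and e: "e \<in> carrier_vec N" "e \<noteq> 0\<^sub>v N"
  shows "v0 = 0"
proof -
  have "\<exists>i < N. e $ i \<noteq> 0"
  proof (rule ccontr)
    assume "\<not> (\<exists>i < N. e $ i \<noteq> 0)"
    then have "e = 0\<^sub>v N"
      using e(1) by (intro eq_vecI) auto
    with e(2) show False ..
  qed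
  then obtain i where i: "i < N" "e $ i \<noteq> 0" by blast
  have Pe: "P *\<^sub>v e = e"
    using equiv_dataD(1)[OF assms(1)] by (simp add: orth_stab_def)
  note shift = equiv_dataD(5)[OF assms(1)]
  have "e $ i = (e + v0 \<cdot>\<^sub>v e) $ i"
    using shift unfolding Pe by (rule arg_cong[where f = "\<lambda>x. x $ i"])
  then have "e $ i = e $ i + v0 * e $ i"
    using e(1) i(1) by simp
  then show "v0 = 0"
    using i(2) by simp
qed

lemma special_equiv_same_vectorD:
  fixes K Y Y' :: "real mat"
  assumes K: "K \<in> carrier_mat N N" "invertible_mat K" and e: "e \<in> carrier_vec N"
    and Y: "Y \<in> carrier_mat N N" and Y': "Y' \<in> carrier_mat N N"
    and "special_equiv K e Y e Y' e"
  shows "\<exists>P \<in> orth_stab K e. \<exists>w \<in> carrier_vec N. Y' = P * (Y + Lmat K w e) * mat_inv P"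
proof -
  obtain P v p v0 where data: "equiv_data K e Y e Y' e P v p v0"
    using assms(6) unfolding special_equiv_def by blast
  note P = equiv_dataD(1)[OF data]
  have v: "v \<in> carrier_vec N" and p: "p \<in> carrier_vec N"
    using equiv_dataD(2,3)[OF data] K(1) by simp_all
  note eq = equiv_dataD(4)[OF data]
  have Pc: "P \<in> carrier_mat N N" "mat_inv P \<in> carrier_mat N N" "P * mat_inv P = 1\<^sub>m N"
    using orth_group_mat_inv[OF K, of P] P by (auto simp: orth_stab_def)
  define w where "w = p - mat_inv P *\<^sub>v v"
  have w: "w \<in> carrier_vec N" using Pc v p by (simp add: w_def)
  have "P *\<^sub>v (mat_inv P *\<^sub>v v) = (P * mat_inv P) *\<^sub>v v"
    using Pc(1,2) v by simp
  also have "\<dots> = v"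
    using v unfolding Pc(3) by simp
  finally have Pw: "P *\<^sub>v w = P *\<^sub>v p - v"
    using Pc(1,2) v p by (simp add: w_def mult_minus_distrib_mat_vec[of _ N N])
  have L: "Lmat K x e \<in> carrier_mat N N" for x
    using K(1) by simp
  have PYQ: "P * Y * mat_inv P \<in> carrier_mat N N"
    using Pc Y by simp
  have "P * (Y + Lmat K w e) * mat_inv P = P * Y * mat_inv P + Lmat K (P *\<^sub>v p - v) e"
    unfolding Pw[symmetric] by (rule orth_stab_conj_add_Lmat[OF K P e Y w])
  also have "\<dots> = (P * Y * mat_inv P + Lmat K (P *\<^sub>v p) e) + - Lmat K v e"
    using Pc p v PYQ L by (simp add: Lmat_diff_left[OF K(1)] minus_add_uminus_mat[of _ N N])
  also have "\<dots> = (Y' + Lmat K v e) + - Lmat K v e"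
    unfolding eq orth_stab_conj_add_Lmat[OF K P e Y p] ..
  also have "\<dots> = Y'"
    using Y' L by (rule add_uminus_cancel_mat)
  finally have "Y' = P * (Y + Lmat K w e) * mat_inv P" ..
  then show ?thesis
    using P w by (intro bexI)
qed

lemma special_equiv_same_vectorI:
  fixes K Y Y' :: "real mat"
  assumes K: "K \<in> carrier_mat N N" "invertible_mat K" and e: "e \<in> carrier_vec N"
    and Y: "Y \<in> carrier_mat N N" and P: "P \<in> orth_stab K e" and w: "w \<in> carrier_vec N"
    and Y': "Y' = P * (Y + Lmat K w e) * mat_inv P"
  shows "special_equiv K e Y e Y' e"
proof -
  have Pc: "P \<in> carrier_mat N N" "mat_inv P \<in> carrier_mat N N" and Pe: "P *\<^sub>v e = e"
    using orth_group_mat_inv[OF K, of P] P by (auto simp: orth_stab_def)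
  have "Y' + Lmat K (- (P *\<^sub>v w)) e
      = (P * Y * mat_inv P + Lmat K (P *\<^sub>v w) e) + - Lmat K (P *\<^sub>v w) e"
    unfolding Y' orth_stab_conj_add_Lmat[OF K P e Y w]
      Lmat_uminus_left[OF K(1) mult_mat_vec_carrier[OF Pc(1) w]] ..
  also have "\<dots> = P * Y * mat_inv P"
    using K Y Pc w by (intro add_uminus_cancel_mat) auto
  also have "\<dots> = P * (Y + Lmat K (0\<^sub>v N) e) * mat_inv P"
    using K Y by (simp add: Lmat_zero_left)
  finally have conj:
    "Y' + Lmat K (- (P *\<^sub>v w)) e = P * (Y + Lmat K (0\<^sub>v N) e) * mat_inv P" .
  have kstar: "kstar K (0\<^sub>v N) e = 0"
    using K e by (simp add: kstar_def)
  have shift: "e = P *\<^sub>v e + 0 \<cdot>\<^sub>v e"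
    using e by (intro eq_vecI) (auto simp: Pe)
  have v: "- (P *\<^sub>v w) \<in> carrier_vec N"
    using Pc w by simp
  have data: "equiv_data K e Y e Y' e P (- (P *\<^sub>v w)) (0\<^sub>v N) 0"
    unfolding equiv_data_def carrier_matD(1)[OF K(1)]
    by (intro conjI P conj kstar shift v zero_carrier_vec)
  show ?thesis
    unfolding special_equiv_def using data by blast
qed

lemma Kbig_carrier: "Kbig n Kt \<in> carrier_mat (n+2) (n+2)"
  by (simp add: Kbig_def)

lemma Kbig_index:
  assumes "i < n+2" "j < n+2"
  shows "Kbig n Kt $$ (i, j) =
     (if i = 0 \<and> j = n+1 then 1
      else if i = n+1 \<and> j = 0 then 1
      else if 1 \<le> i \<and> i \<le> n \<and> 1 \<le> j \<and> j \<le> n then Kt $$ (i-1, j-1)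
      else 0)"
  using assms unfolding Kbig_def by simp

lemma sum_lessThan_Suc_Suc_split:
  "(\<Sum>k<Suc (Suc n). f k) = f 0 + (\<Sum>k<n. f (Suc k)) + f (Suc n)"
  by (subst sum.lessThan_Suc) (subst sum.lessThan_Suc_shift, rule refl)

lemma Kbig_mult_self:
  assumes Kt: "Kt \<in> carrier_mat n n" and Kt_sq: "Kt * Kt = 1\<^sub>m n"
  shows "Kbig n Kt * Kbig n Kt = 1\<^sub>m (n+2)"
proof (rule eq_matI)
  let ?K = "Kbig n Kt"
  let ?mid = "\<lambda>i j. \<Sum>k<n. ?K $$ (i, Suc k) * ?K $$ (Suc k, j)"
  fix i j assume "i < dim_row (1\<^sub>m (n+2) :: real mat)" "j < dim_col (1\<^sub>m (n+2) :: real mat)"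
  then have i: "i < n+2" and j: "j < n+2" by auto
  have "(?K * ?K) $$ (i, j) = (\<Sum>k<Suc (Suc n). ?K $$ (i, k) * ?K $$ (k, j))"
    using i j Kbig_carrier[of n Kt] by (simp add: scalar_prod_def lessThan_atLeast0)
  also have "\<dots> = ?K $$ (i, 0) * ?K $$ (0, j) + ?mid i j + ?K $$ (i, Suc n) * ?K $$ (Suc n, j)"
    by (rule sum_lessThan_Suc_Suc_split)
  also have "\<dots> = 1\<^sub>m (n+2) $$ (i, j)"
  proof -
    consider (outer) "i = 0 \<or> i = n+1" | (inner) "1 \<le> i \<and> i \<le> n"
      using i by linarith
    then show ?thesis
    proof cases
      case outer
      have "?mid i j = 0" by (rule sum.neutral) (use outer j in \<open>auto simp: Kbig_index\<close>)
      then show ?thesis using outer j by (auto simp: Kbig_index)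
    next
      case inner
      have "?mid i j = (if 1 \<le> j \<and> j \<le> n then (Kt * Kt) $$ (i-1, j-1) else 0)"
      proof (cases "1 \<le> j \<and> j \<le> n")
        case True
        with inner have "i-1 < n" "j-1 < n" by auto
        from True have "?mid i j = (\<Sum>k<n. Kt $$ (i-1, k) * Kt $$ (k, j-1))"
          using inner by (intro sum.cong) (auto simp: Kbig_index)
        also have "\<dots> = (Kt * Kt) $$ (i-1, j-1)"
          using Kt \<open>i-1 < n\<close> \<open>j-1 < n\<close> by (simp add: scalar_prod_def lessThan_atLeast0)
        finally show ?thesis using True by simp
      qed (use inner j in \<open>auto intro!: sum.neutral simp: Kbig_index\<close>)
      then show ?thesis
        using inner j unfolding Kt_sq by (auto simp: Kbig_index)
    qed
  qed
  finally show "(?K * ?K) $$ (i, j) = 1\<^sub>m (n+2) $$ (i, j)" .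
qed (simp_all add: Kbig_def)

lemma elast_carrier: "elast n \<in> carrier_vec (n+2)"
  by (simp add: elast_def)

lemma elast_nonzero: "elast n \<noteq> 0\<^sub>v (n+2)"
proof
  assume "elast n = 0\<^sub>v (n+2)"
  then have "elast n $ (n+1) = 0" by simp
  then show False by (simp add: elast_def)
qed

theorem lemma7:
  fixes n :: nat and Kt Y Y' :: "real mat"
  assumes Kt_carrier: "Kt \<in> carrier_mat n n"
    and Kt_sym: "transpose_mat Kt = Kt"
    and Kt_sq: "Kt * Kt = 1\<^sub>m n"
    and Y: "Y \<in> orth_alg (Kbig n Kt)"
    and Y': "Y' \<in> orth_alg (Kbig n Kt)"
  shows "(special_equiv (Kbig n Kt) (elast n) Y (elast n) Y' (elast n) \<longleftrightarrow>
           (\<exists>P \<in> orth_stab (Kbig n Kt) (elast n). \<exists>w \<in> carrier_vec (n+2).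
              Y' = P * (Y + Lmat (Kbig n Kt) w (elast n)) * mat_inv P))
      \<and> (\<forall>P v p v0. equiv_data (Kbig n Kt) (elast n) Y (elast n) Y' (elast n) P v p v0
           \<longrightarrow> v0 = 0)"
proof -
  have K: "Kbig n Kt \<in> carrier_mat (n+2) (n+2)" "invertible_mat (Kbig n Kt)"
    using Kbig_carrier Kbig_mult_self[OF Kt_carrier Kt_sq]
    by (auto intro: invertible_mat_if_mult_self_eq_one)
  have Yc: "Y \<in> carrier_mat (n+2) (n+2)" "Y' \<in> carrier_mat (n+2) (n+2)"
    using Y Y' by (simp_all add: orth_alg_def Kbig_def)
  have "special_equiv (Kbig n Kt) (elast n) Y (elast n) Y' (elast n) \<longleftrightarrow>
           (\<exists>P \<in> orth_stab (Kbig n Kt) (elast n). \<exists>w \<in> carrier_vec (n+2).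
              Y' = P * (Y + Lmat (Kbig n Kt) w (elast n)) * mat_inv P)"
    using special_equiv_same_vectorD[OF K elast_carrier Yc]
      special_equiv_same_vectorI[OF K elast_carrier Yc(1)] by blast
  moreover have "equiv_data (Kbig n Kt) (elast n) Y (elast n) Y' (elast n) P v p v0 \<Longrightarrow> v0 = 0"
    for P v p v0
    by (rule equiv_data_same_vector_scalar_eq_0[OF _ elast_carrier elast_nonzero])
  ultimately show ?thesis by blast
qed

end
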